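(* Let $G$ be a connected graph with infinitely many nodes, not necessarily locally finite. Suppose ${}^{*}G$ has a hypernode that is not in its principal galaxy $\Gamma_0$. Then there exist galaxies $\Gamma_i$, $i\in\mathbb Z$, of ${}^{*}G$, all different from $\Gamma_0$, such that for all integers $i<j$ the galaxy $\Gamma_i$ is closer to $\Gamma_0$ than is $\Gamma_j$. In other words, there is a two-way infinite sequence of galaxies totally ordered according to their closeness to $\Gamma_0$.
   Context: Conventions. $G=\{X,B\}$ is a graph whose branches are two-element subsets of $X$, and $d$ is the graph distance. Fix a free ultrafilter $\mathcal F$ on $\mathbb N$. Hypernodes and enlargement. Hypernodes are classes $[x_n]$ of node sequences, with two sequences identified when they agree on a set in $\mathcal F$. A standard hypernode is the class of a constant sequence. ${}^{*}G$ consists of the hypernodes and the hyperbranches $[\{x_n,y_n\}]$ with $\{n:\{x_n,y_n\}\in B\}\in\mathcal F$. Galaxies. Hypernodes $[x_n]$ and $[y_n]$ are limitedly distant if $\{n:d(x_n,y_n)\le k\}\in\mathcal F$ for some $k\in\mathbb N$. Galaxies are the classes of this equivalence relation, together with the hyperbranches between their hypernodes. The principal galaxy $\Gamma_0$ contains the standard hypernodes. Closeness. For galaxies $\Gamma_a,\Gamma_b\ne\Gamma_0$, $\Gamma_a$ is closer to $\Gamma_0$ than is $\Gamma_b$ if there exist ${\bf y}=[y_n]\in\Gamma_a$, ${\bf z}=[z_n]\in\Gamma_b$ and ${\bf x}=[x_n]\in\Gamma_0$ such that for every $m\in\mathbb N$, $\{n: d(z_n,x_n)-d(y_n,x_n)\ge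 m\}\in\mathcal F$. *)

theory Defs
  imports Main
begin

definition is_graph :: "'a set \<Rightarrow> 'a set set \<Rightarrow> bool" where
  "is_graph X B \<equiv> (\<forall>b\<in>B. \<exists>x y. x \<in> X \<and> y \<in> X \<and> x \<noteq> y \<and> b = {x, y})"

definition is_walk :: "'a set set \<Rightarrow> 'a list \<Rightarrow> bool" where
  "is_walk B xs \<equiv> xs \<noteq> [] \<and> (\<forall>i. Suc i < length xs \<longrightarrow> {xs ! i, xs ! Suc i} \<in> B)"

definition connected_graph :: "'a set \<Rightarrow> 'a set set \<Rightarrow> bool" where
  "connected_graph X B \<equiv>
     (\<forall>x\<in>X. \<forall>y\<in>X. \<exists>xs. is_walk B xs \<and> hd xs = x \<and> last xs = y)"

definition gdist :: "'a set set \<Rightarrow> 'a \<Rightarrow> 'a \<Rightarrow> nat" where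
  "gdist B x y = (LEAST n. \<exists>xs. is_walk B xs \<and> hd xs = x \<and> last xs = y \<and> length xs = Suc n)"

definition free_ultrafilter :: "nat set set \<Rightarrow> bool" where
  "free_ultrafilter F \<equiv>
     UNIV \<in> F \<and> {} \<notin> F \<and>
     (\<forall>A C. A \<in> F \<longrightarrow> A \<subseteq> C \<longrightarrow> C \<in> F) \<and>
     (\<forall>A C. A \<in> F \<longrightarrow> C \<in> F \<longrightarrow> A \<inter> C \<in> F) \<and>
     (\<forall>A. A \<in> F \<or> - A \<in> F) \<and>
     (\<forall>A. finite A \<longrightarrow> A \<notin> F)"

text \<open>Node sequences (representatives of hypernodes).\<close>
definition node_seq :: "'a set \<Rightarrow> (nat \<Rightarrow> 'a) \<Rightarrow> bool" where
  "node_seq X x \<equiv> (\<forall>n. x n \<in> X)"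

definition lim_distant :: "nat set set \<Rightarrow> 'a set set \<Rightarrow> (nat \<Rightarrow> 'a) \<Rightarrow> (nat \<Rightarrow> 'a) \<Rightarrow> bool" where
  "lim_distant F B x y \<equiv> (\<exists>k::nat. {n. gdist B (x n) (y n) \<le> k} \<in> F)"

definition galaxy :: "nat set set \<Rightarrow> 'a set \<Rightarrow> 'a set set \<Rightarrow> (nat \<Rightarrow> 'a) \<Rightarrow> (nat \<Rightarrow> 'a) set" where
  "galaxy F X B x = {y. node_seq X y \<and> lim_distant F B y x}"

definition galaxies :: "nat set set \<Rightarrow> 'a set \<Rightarrow> 'a set set \<Rightarrow> (nat \<Rightarrow> 'a) set set" where
  "galaxies F X B = {galaxy F X B x | x. node_seq X x}"

definition principal_galaxy :: "nat set set \<Rightarrow> 'a set \<Rightarrow> 'a set set \<Rightarrow> (nat \<Rightarrow> 'a) set" where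
  "principal_galaxy F X B = {y. node_seq X y \<and> (\<exists>a\<in>X. lim_distant F B y (\<lambda>_. a))}"

definition closer :: "nat set set \<Rightarrow> 'a set \<Rightarrow> 'a set set \<Rightarrow> (nat \<Rightarrow> 'a) set \<Rightarrow> (nat \<Rightarrow> 'a) set \<Rightarrow> bool" where
  "closer F X B Ga Gb \<equiv>
     (\<exists>y\<in>Ga. \<exists>z\<in>Gb. \<exists>x\<in>principal_galaxy F X B.
        \<forall>m::nat. {n. int (gdist B (z n) (x n)) - int (gdist B (y n) (x n)) \<ge> int m} \<in> F)"

end

theory Submission imports Defs "HOL-Library.Discrete_Functions" begin

(* Let x be a hypernode outside the principal galaxy and a a standard node, so that
   D_n = d(x_n, a) is unlimited. On a shortest path from x_n to a pick the node y^i_n at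
   distance D_n/2 + i sqrt(D_n) from a; this is possible for every fixed i once D_n >= 4 i^2.
   For i < j the distances to a differ by (j - i) sqrt(D_n), which is unlimited, so the galaxy
   of y^i is closer to the principal galaxy than that of y^j; in particular each y^i is
   unlimitedly far from a, hence outside the principal galaxy. *)

lemma is_walk_append:
  assumes p: "is_walk B p" and q: "is_walk B q" and joint: "last p = hd q"
  shows "is_walk B (p @ tl q)"
  unfolding is_walk_def
proof (intro conjI allI impI)
  show "p @ tl q \<noteq> []" using p by (simp add: is_walk_def)
  fix i assume i: "Suc i < length (p @ tl q)"
  have "p \<noteq> []" and "q \<noteq> []" using p q by (auto simp: is_walk_def)
  consider "Suc i < length p" | "Suc i = length p" | "Suc i > length p" by linarith
  then show "{(p @ tl q) ! i, (p @ tl q) ! Suc i} \<in> B"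
  proof cases
    case 1
    then show ?thesis using p by (simp add: nth_append is_walk_def)
  next
    case 2
    then have "i = length p - 1" by simp
    then have "(p @ tl q) ! i = q ! 0"
      using 2 \<open>p \<noteq> []\<close> \<open>q \<noteq> []\<close> joint by (simp add: nth_append last_conv_nth hd_conv_nth)
    moreover have "(p @ tl q) ! Suc i = q ! 1" using 2 i by (simp add: nth_append nth_tl)
    moreover have "Suc 0 < length q" using 2 i by simp
    ultimately show ?thesis using q unfolding is_walk_def by auto
  next
    case 3
    have "Suc (Suc (i - length p)) < length q" using 3 i by simp
    moreover have "(p @ tl q) ! i = q ! Suc (i - length p)"
      using 3 calculation by (simp add: nth_append nth_tl)
    moreover have "(p @ tl q) ! Suc i = q ! Suc (Suc (i - length p))"
      using 3 calculation by (simp add: nth_append nth_tl Suc_diff_le)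
    ultimately show ?thesis using q unfolding is_walk_def by auto
  qed
qed

lemma is_walk_take:
  assumes "is_walk B w" "k < length w"
  shows "is_walk B (take (Suc k) w)" "hd (take (Suc k) w) = hd w" "last (take (Suc k) w) = w ! k"
proof -
  have "length w \<le> Suc k \<Longrightarrow> k = length w - 1" using assms(2) by arith
  then show "is_walk B (take (Suc k) w)" "hd (take (Suc k) w) = hd w" "last (take (Suc k) w) = w ! k"
    using assms by (auto simp: is_walk_def last_conv_nth hd_conv_nth min_def)
qed

lemma is_walk_drop:
  assumes "is_walk B w" "k < length w"
  shows "is_walk B (drop k w)" "hd (drop k w) = w ! k" "last (drop k w) = last w"
  using assms by (auto simp: is_walk_def hd_drop_conv_nth)

lemma is_walk_nth_in_nodes:
  assumes "is_graph X B" "is_walk B w" "hd w \<in> X" "k < length w"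
  shows "w ! k \<in> X"
proof (cases k)
  case 0
  then show ?thesis using assms(2,3) by (simp add: is_walk_def hd_conv_nth)
next
  case (Suc j)
  then have "{w ! j, w ! k} \<in> B" using assms(2,4) by (simp add: is_walk_def)
  then obtain x y where "x \<in> X" "y \<in> X" "{w ! j, w ! k} = {x, y}"
    using assms(1) unfolding is_graph_def by meson
  then show ?thesis by (metis doubleton_eq_iff)
qed

lemma gdist_le_walk_length:
  assumes "is_walk B w" "hd w = u" "last w = v"
  shows "gdist B u v \<le> length w - 1"
proof -
  have "length w = Suc (length w - 1)" using assms(1) by (cases w) (auto simp: is_walk_def)
  then show ?thesis unfolding gdist_def using assms by (intro Least_le) blast
qed

lemma shortest_walk_exists:
  assumes "is_walk B w" "hd w = u" "last w = v"
  obtains p where "is_walk B p" "hd p = u" "last p = v" "length p = Suc (gdist B u v)"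
proof -
  have "length w = Suc (length w - 1)" using assms(1) by (cases w) (auto simp: is_walk_def)
  then have "\<exists>n p. is_walk B p \<and> hd p = u \<and> last p = v \<and> length p = Suc n" using assms by blast
  then have "\<exists>p. is_walk B p \<and> hd p = u \<and> last p = v \<and> length p = Suc (gdist B u v)"
    unfolding gdist_def by (rule LeastI_ex)
  then show ?thesis using that by blast
qed

lemma gdist_self: "gdist B u u = 0"
  using gdist_le_walk_length[of B "[u]" u u] by (simp add: is_walk_def)

lemma gdist_triangle:
  assumes "connected_graph X B" "u \<in> X" "v \<in> X" "w \<in> X"
  shows "gdist B u w \<le> gdist B u v + gdist B v w"
proof -
  obtain p where p: "is_walk B p" "hd p = u" "last p = v" "length p = Suc (gdist B u v)"
    using assms shortest_walk_exists unfolding connected_graph_def by metis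
  obtain q where q: "is_walk B q" "hd q = v" "last q = w" "length q = Suc (gdist B v w)"
    using assms shortest_walk_exists unfolding connected_graph_def by metis
  have "is_walk B (p @ tl q)" using p q by (intro is_walk_append) auto
  moreover have "hd (p @ tl q) = u" using p by (cases p) (auto simp: is_walk_def)
  moreover have "last (p @ tl q) = w" using p q by (cases q) (auto simp: is_walk_def)
  ultimately have "gdist B u w \<le> length (p @ tl q) - 1" by (rule gdist_le_walk_length)
  then show ?thesis using p q by simp
qed

lemma gdist_along_shortest_walk:
  assumes w: "is_walk B w" "hd w = u" "last w = v" "length w = Suc (gdist B u v)"
    and i: "i \<le> gdist B u v"
  shows "gdist B (w ! i) v = gdist B u v - i"
proof (rule antisym)
  have "gdist B (w ! i) v \<le> length (drop i w) - 1"
    using is_walk_drop[of B w i] w i by (intro gdist_le_walk_length) auto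
  then show "gdist B (w ! i) v \<le> gdist B u v - i" using w by simp
next
  obtain q where q: "is_walk B q" "hd q = w ! i" "last q = v" "length q = Suc (gdist B (w ! i) v)"
    using shortest_walk_exists[of B "drop i w" "w ! i" v] is_walk_drop[of B w i] w i by auto
  have "is_walk B (take (Suc i) w @ tl q)"
    using is_walk_take[of B w i] w i q by (intro is_walk_append) auto
  moreover have "hd (take (Suc i) w @ tl q) = u" using w by (simp add: is_walk_def)
  moreover have "last (take (Suc i) w @ tl q) = v"
    using q is_walk_take[of B w i] w i by (cases q) (auto simp: is_walk_def)
  ultimately have "gdist B u v \<le> length (take (Suc i) w @ tl q) - 1" by (rule gdist_le_walk_length)
  then show "gdist B u v - i \<le> gdist B (w ! i) v" using q w i by (auto simp: min_def split: if_splits)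
qed

lemma gdist_intermediate_node:
  assumes "is_graph X B" "connected_graph X B" "u \<in> X" "v \<in> X" "t \<le> gdist B u v"
  shows "\<exists>z\<in>X. gdist B z v = t"
proof -
  obtain w where w: "is_walk B w" "hd w = u" "last w = v" "length w = Suc (gdist B u v)"
    using assms(2-4) shortest_walk_exists unfolding connected_graph_def by metis
  let ?i = "gdist B u v - t"
  have "w ! ?i \<in> X" using assms(1,3) w by (intro is_walk_nth_in_nodes) auto
  moreover have "gdist B (w ! ?i) v = t" using gdist_along_shortest_walk[OF w, of ?i] assms(5) by simp
  ultimately show ?thesis by blast
qed

lemma free_ultrafilterD:
  assumes "free_ultrafilter F"
  shows "UNIV \<in> F" "{} \<notin> F" "A \<in> F \<Longrightarrow> A \<subseteq> C \<Longrightarrow> C \<in> F"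
    "A \<in> F \<Longrightarrow> C \<in> F \<Longrightarrow> A \<inter> C \<in> F" "A \<notin> F \<Longrightarrow> - A \<in> F"
  using assms unfolding free_ultrafilter_def by (elim conjE; metis)+

lemma free_ultrafilter_Int_nonempty:
  assumes "free_ultrafilter F" "A \<in> F" "C \<in> F"
  obtains n where "n \<in> A" "n \<in> C"
proof -
  have "A \<inter> C \<noteq> {}"
    using free_ultrafilterD(4)[OF assms] free_ultrafilterD(2)[OF assms(1)] by metis
  then show ?thesis using that by blast
qed

lemma lim_distant_self: "free_ultrafilter F \<Longrightarrow> lim_distant F B x x"
  unfolding lim_distant_def using free_ultrafilterD(1) by (simp add: gdist_self)

lemma gdist_to_standard_unlimited:
  assumes "free_ultrafilter F" "x \<notin> principal_galaxy F X B" "node_seq X x" "a \<in> X"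
  shows "{n. K < gdist B (x n) a} \<in> F"
proof -
  have "{n. gdist B (x n) a \<le> K} \<notin> F"
    using assms(2-4) unfolding principal_galaxy_def lim_distant_def by blast
  then have "- {n. gdist B (x n) a \<le> K} \<in> F" by (rule free_ultrafilterD(5)[OF assms(1)])
  then show ?thesis by (simp add: Compl_eq not_le)
qed

lemma galaxy_not_principal:
  assumes F: "free_ultrafilter F" and C: "connected_graph X B" and a: "a \<in> X"
    and y: "node_seq X y" and far: "\<And>m. {n. m \<le> gdist B (y n) a} \<in> F"
  shows "galaxy F X B y \<noteq> principal_galaxy F X B"
proof
  assume "galaxy F X B y = principal_galaxy F X B"
  moreover have "y \<in> galaxy F X B y" using y lim_distant_self[OF F] by (simp add: galaxy_def)
  ultimately obtain b k where b: "b \<in> X" and near: "{n. gdist B (y n) b \<le> k} \<in> F"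
    unfolding principal_galaxy_def lim_distant_def by blast
  obtain n where "gdist B (y n) b \<le> k" "k + gdist B b a + 1 \<le> gdist B (y n) a"
    using free_ultrafilter_Int_nonempty[OF F near far] by blast
  moreover have "gdist B (y n) a \<le> gdist B (y n) b + gdist B b a"
    using gdist_triangle[OF C _ b a] y by (simp add: node_seq_def)
  ultimately show False by linarith
qed

lemma closer_galaxies:
  assumes F: "free_ultrafilter F" and a: "a \<in> X" and "node_seq X y" "node_seq X z"
    and "\<And>m. {n. int (gdist B (z n) a) - int (gdist B (y n) a) \<ge> int m} \<in> F"
  shows "closer F X B (galaxy F X B y) (galaxy F X B z)"
proof -
  have a_principal: "(\<lambda>_. a) \<in> principal_galaxy F X B"
    using a lim_distant_self[OF F] by (auto simp: principal_galaxy_def node_seq_def)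
  have "y \<in> galaxy F X B y" "z \<in> galaxy F X B z"
    using assms(3,4) lim_distant_self[OF F] by (simp_all add: galaxy_def)
  then show ?thesis
    unfolding closer_def using assms(5) by (intro bexI[OF _ a_principal] bexI allI)
qed

(* Clamped to [0, D] so that a geodesic of length D always has a node at this distance from
   its end; the clamping is inactive once 4 i^2 <= D. *)
definition level :: "int \<Rightarrow> nat \<Rightarrow> nat" where
  "level i D = nat (min (int D) (int (D div 2) + i * int (floor_sqrt D)))"

lemma level_le: "level i D \<le> D"
  unfolding level_def by linarith

lemma level_eq:
  assumes "(2 * nat \<bar>i\<bar>)^2 \<le> D"
  shows "int (level i D) = int (D div 2) + i * int (floor_sqrt D)"
proof -
  let ?c = "nat \<bar>i\<bar>" and ?S = "floor_sqrt D"
  have "2 * ?c \<le> ?S" using assms le_floor_sqrtI by blast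
  then have "2 * ?c * ?S \<le> ?S * ?S" by simp
  also have "\<dots> \<le> D" using floor_sqrt_power2_le[of D] by (simp add: power2_eq_square)
  finally have "?c * ?S \<le> D div 2" by linarith
  moreover have "\<bar>i * int ?S\<bar> = int (?c * ?S)" by (simp add: abs_mult)
  ultimately have "\<bar>i * int ?S\<bar> \<le> int (D div 2)" by linarith
  then show ?thesis unfolding level_def by linarith
qed

lemma level_gap:
  assumes "i < j" "(2 * nat \<bar>i\<bar>)^2 + (2 * nat \<bar>j\<bar>)^2 + m^2 \<le> D"
  shows "int m \<le> int (level j D) - int (level i D)"
proof -
  have "int (level j D) - int (level i D) = (j - i) * int (floor_sqrt D)"
    using level_eq[of i D] level_eq[of j D] assms(2) by (simp add: algebra_simps)
  moreover have "int (floor_sqrt D) \<le> (j - i) * int (floor_sqrt D)"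
    using assms(1) mult_right_mono[of 1 "j - i" "int (floor_sqrt D)"] by simp
  moreover have "m \<le> floor_sqrt D" using assms(2) le_floor_sqrtI by simp
  ultimately show ?thesis by linarith
qed

lemma level_gap_unlimited:
  assumes F: "free_ultrafilter F" and D: "\<And>K. {n. K < D n} \<in> F" and "i < j"
  shows "{n. int (level j (D n)) - int (level i (D n)) \<ge> int m} \<in> F"
proof -
  have "{n. (2 * nat \<bar>i\<bar>)^2 + (2 * nat \<bar>j\<bar>)^2 + m^2 < D n}
          \<subseteq> {n. int (level j (D n)) - int (level i (D n)) \<ge> int m}"
    using level_gap[OF \<open>i < j\<close>, of m] by auto
  then show ?thesis by (rule free_ultrafilterD(3)[OF F D])
qed

theorem theorem4p2:
  fixes X :: "'a set" and B :: "'a set set" and F :: "nat set set"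
  assumes "is_graph X B" and "connected_graph X B" and "infinite X"
    and "free_ultrafilter F"
    and "\<exists>x. node_seq X x \<and> x \<notin> principal_galaxy F X B"
  shows "\<exists>\<Gamma> :: int \<Rightarrow> (nat \<Rightarrow> 'a) set.
           (\<forall>i. \<Gamma> i \<in> galaxies F X B \<and> \<Gamma> i \<noteq> principal_galaxy F X B) \<and>
           (\<forall>i j. i < j \<longrightarrow> closer F X B (\<Gamma> i) (\<Gamma> j))"
proof -
  obtain x where x: "node_seq X x" "x \<notin> principal_galaxy F X B" using assms(5) by blast
  obtain a where a: "a \<in> X" using assms(3) by (metis finite.emptyI ex_in_conv)
  define D where "D n = gdist B (x n) a" for n
  have D_unlimited: "{n. K < D n} \<in> F" for K
    unfolding D_def using gdist_to_standard_unlimited[OF assms(4) x(2,1) a] .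
  have "\<exists>z. z \<in> X \<and> gdist B z a = level i (D n)" for i n
    using gdist_intermediate_node[OF assms(1,2) _ a, of "x n" "level i (D n)"] x(1) level_le
    unfolding node_seq_def D_def by blast
  then obtain y where y: "\<And>i n. y i n \<in> X \<and> gdist B (y i n) a = level i (D n)" by metis
  then have y_seq: "node_seq X (y i)" for i by (simp add: node_seq_def)
  have y_gap: "{n. int (gdist B (y j n) a) - int (gdist B (y i n) a) \<ge> int m} \<in> F" if "i < j" for i j m
    using level_gap_unlimited[OF assms(4) D_unlimited that] y by simp
  have "{n. m \<le> gdist B (y i n) a} \<in> F" for i m
  proof (rule free_ultrafilterD(3)[OF assms(4) y_gap])
    show "{n. int (gdist B (y i n) a) - int (gdist B (y (i - 1) n) a) \<ge> int m}
            \<subseteq> {n. m \<le> gdist B (y i n) a}" by auto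
  qed simp
  then have "galaxy F X B (y i) \<noteq> principal_galaxy F X B" for i
    by (rule galaxy_not_principal[OF assms(4,2) a y_seq])
  moreover have "galaxy F X B (y i) \<in> galaxies F X B" for i
    using y_seq unfolding galaxies_def by blast
  moreover have "closer F X B (galaxy F X B (y i)) (galaxy F X B (y j))" if "i < j" for i j
    using closer_galaxies[OF assms(4) a y_seq y_seq y_gap[OF that]] .
  ultimately show ?thesis by (intro exI[of _ "\<lambda>i. galaxy F X B (y i)"] conjI allI impI)
qed

end
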